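(* Let $(Q,\cdot)$ be a quasigroup satisfying $(xx)(yz)=(x(xy))z$ for all $x,y,z\in Q$ (an LC1-quasigroup). Then $Q$ satisfies $x(x(yz))=((xx)y)z$ for all $x,y,z\in Q$ (i.e. $Q$ is an LC3-quasigroup).
   Context: A quasigroup is a set $Q$ with a binary operation $\cdot$ (written as juxtaposition) such that for all $a,b\in Q$ each of the equations $ax=b$ and $ya=b$ has a unique solution in $Q$. *)

theory Defs
  imports Main
begin

definition quasigroup :: "'a set \<Rightarrow> ('a \<Rightarrow> 'a \<Rightarrow> 'a) \<Rightarrow> bool" where
  "quasigroup Q m \<longleftrightarrow>
     (\<forall>a\<in>Q. \<forall>b\<in>Q. m a b \<in> Q) \<and>
     (\<forall>a\<in>Q. \<forall>b\<in>Q. (\<exists>!x. x \<in> Q \<and> m a x = b) \<and> (\<exists>!y. y \<in> Q \<and> m y a = b))"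

end

theory Submission
  imports Defs
begin

(* An LC1-quasigroup is a loop. If a e = a, then LC1 with x = a, y = e and left cancellation
   by a a give e w = w for all w, so every local right unit is a left identity; right
   cancellation of f e = e = e e then shows all local right units coincide, so e is a two-sided
   identity. Putting e for z in LC1 yields (x x) w = x (x w), and LC3 is LC1 with both sides
   rewritten by this law. *)

locale quasigroup_on =
  fixes Q :: "'a set" and m :: "'a \<Rightarrow> 'a \<Rightarrow> 'a"
  assumes quasigroup: "quasigroup Q m"
begin

lemma closed: "a \<in> Q \<Longrightarrow> b \<in> Q \<Longrightarrow> m a b \<in> Q"
  using quasigroup unfolding quasigroup_def by blast

lemma left_cancel:
  assumes "a \<in> Q" "b \<in> Q" "c \<in> Q" "m a b = m a c"
  shows "b = c"
proof -
  have "\<exists>!x. x \<in> Q \<and> m a x = m a b"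
    using quasigroup assms closed unfolding quasigroup_def by blast
  then show ?thesis using assms by metis
qed

lemma right_cancel:
  assumes "a \<in> Q" "b \<in> Q" "c \<in> Q" "m b a = m c a"
  shows "b = c"
proof -
  have "\<exists>!y. y \<in> Q \<and> m y a = m b a"
    using quasigroup assms closed unfolding quasigroup_def by blast
  then show ?thesis using assms by metis
qed

lemma right_unit_exists: "a \<in> Q \<Longrightarrow> \<exists>e\<in>Q. m a e = a"
  using quasigroup unfolding quasigroup_def by blast

end

locale lc1_quasigroup = quasigroup_on +
  assumes LC1: "\<forall>x\<in>Q. \<forall>y\<in>Q. \<forall>z\<in>Q. m (m x x) (m y z) = m (m x (m x y)) z"
begin

lemma right_unit_left_neutral:
  assumes "a \<in> Q" "e \<in> Q" "m a e = a" "w \<in> Q"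
  shows "m e w = w"
proof -
  have "m (m a a) (m e w) = m (m a (m a e)) w" using LC1 assms by blast
  then have "m (m a a) (m e w) = m (m a a) w" using assms by simp
  then show ?thesis using left_cancel closed assms by blast
qed

lemma right_unit_right_neutral:
  assumes "a \<in> Q" "e \<in> Q" "m a e = a" "w \<in> Q"
  shows "m w e = w"
proof -
  obtain f where f: "f \<in> Q" "m w f = w" using right_unit_exists assms(4) by blast
  have "m f e = m e e"
    using right_unit_left_neutral[OF assms(4) f assms(2)] right_unit_left_neutral[OF assms(1-3,2)]
    by simp
  then have "f = e" using right_cancel assms(2) f(1) by blast
  then show ?thesis using f by simp
qed

lemma square_left_mult:
  assumes "x \<in> Q" "w \<in> Q"
  shows "m (m x x) w = m x (m x w)"
proof -
  obtain e where e: "e \<in> Q" "m x e = x" using right_unit_exists assms(1) by blast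
  have "m (m x x) (m w e) = m (m x (m x w)) e" using LC1 assms e(1) by blast
  then show ?thesis
    using right_unit_right_neutral[OF assms(1) e] assms closed by simp
qed

lemma LC3: "\<forall>x\<in>Q. \<forall>y\<in>Q. \<forall>z\<in>Q. m x (m x (m y z)) = m (m (m x x) y) z"
proof (intro ballI)
  fix x y z assume xyz: "x \<in> Q" "y \<in> Q" "z \<in> Q"
  have "m x (m x (m y z)) = m (m x x) (m y z)" using square_left_mult xyz closed by simp
  also have "\<dots> = m (m x (m x y)) z" using LC1 xyz by blast
  also have "\<dots> = m (m (m x x) y) z" using square_left_mult xyz by simp
  finally show "m x (m x (m y z)) = m (m (m x x) y) z" .
qed

end

theorem mainTheorem6:
  fixes Q :: "'a set" and m :: "'a \<Rightarrow> 'a \<Rightarrow> 'a"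
  assumes "quasigroup Q m"
    and LC1: "\<forall>x\<in>Q. \<forall>y\<in>Q. \<forall>z\<in>Q. m (m x x) (m y z) = m (m x (m x y)) z"
  shows "\<forall>x\<in>Q. \<forall>y\<in>Q. \<forall>z\<in>Q. m x (m x (m y z)) = m (m (m x x) y) z"
proof -
  interpret lc1_quasigroup Q m
    using assms by unfold_locales
  show ?thesis by (rule LC3)
qed

end
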